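(* Consider a homogeneous controlled queueing network $\{X_n,n\ge 0\}$ on $\mathcal{S}=\mathbb{Z}_+^M$ with action drift matrix $\mathbf{D}$. Suppose that $\mathrm{rank}(\mathbf{D})<M$ and that the following non-degeneracy condition holds: the system $\mathbf{D}\boldsymbol{\alpha}=\mathbf{0}$ has a solution $\boldsymbol{\alpha}\in\mathbb{R}^M$ such that for every $\mathbf{x}\in\mathcal{S}$ and every $a\in\mathcal{A}(\mathbf{x})$, $\mathbb{P}_a(\boldsymbol{\alpha}'X_1\neq\boldsymbol{\alpha}'\mathbf{x}\mid X_0=\mathbf{x})>0$. Then the network is non-stabilizable.
   Context: A homogeneous controlled queueing network is a controlled discrete-time Markov chain $\{X_n,n\ge0\}$ with state space $\mathcal{S}=\mathbb{Z}_+^M$. For each $\mathbf{z}\in\mathcal{S}$, $\mathcal{A}(\mathbf{z})$ is the set of actions available at $\mathbf{z}$, and $\mathcal{A}=\bigcup_{\mathbf{z}}\mathcal{A}(\mathbf{z})=\{a_1,\dots,a_L\}$ is finite. A (deterministic stationary) policy is a function $\mathcal{P}:\mathcal{S}\to\mathcal{A}$ with $\mathcal{P}(\mathbf{z})\in\mathcal{A}(\mathbf{z})$; under any policy $X_n\in\mathcal{S}$ for all $n$. When action $a$ is taken in state $\mathbf{z}$, transitions follow $\mathbb{P}_a(X_{n+1}=\cdot\mid X_n=\mathbf{z})$, and homogeneity means $\tilde P_a(\mathbf{x}):=\mathbb{P}_a(X_{n+1}-\mathbf{z}=\mathbf{x}\mid X_n=\mathbf{z})$ does not depend on $\mathbf{z}$.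 With $\mathbf{e}_i$ the canonical row vectors of $\mathbb{R}^M$, the set $\mathcal{D}=\{\mathbf{x}:\tilde P_a(\mathbf{x})>0\text{ for some }a\in\mathcal{A}\}$ consists only of vectors of the forms $\mathbf{e}_i$, $-\mathbf{e}_i$, or $\mathbf{e}_i-\mathbf{e}_j$ with $i\neq j$. The drift vector of action $a_i$ is $\boldsymbol{\Delta}_i=\mathbb{E}_{a_i}[X_{n+1}-X_n\mid X_n]=\sum_{\mathbf{x}}\mathbf{x}\,\tilde P_{a_i}(\mathbf{x})$, and the action drift matrix $\mathbf{D}$ is the $L\times M$ matrix with rows $\boldsymbol{\Delta}_i'$, $i=1,\dots,L$. The network is non-stabilizable if there is no policy under which the chain has a positive recurrent class that is reached with probability 1. *)

theory Defs
  imports "HOL-Probability.Probability"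
begin

primrec nstep :: "('s \<Rightarrow> 's pmf) \<Rightarrow> nat \<Rightarrow> 's \<Rightarrow> 's pmf" where
  "nstep K 0 x = return_pmf x"
| "nstep K (Suc n) x = bind_pmf (K x) (nstep K n)"

definition accessible :: "('s \<Rightarrow> 's pmf) \<Rightarrow> 's \<Rightarrow> 's \<Rightarrow> bool" where
  "accessible K x y \<longleftrightarrow> (\<exists>n. pmf (nstep K n x) y > 0)"

definition communicate :: "('s \<Rightarrow> 's pmf) \<Rightarrow> 's \<Rightarrow> 's \<Rightarrow> bool" where
  "communicate K x y \<longleftrightarrow> accessible K x y \<and> accessible K y x"

text \<open>First-passage probabilities: fpass K y n x = P(X_n = y, X_k \<noteq> y for 1 \<le> k < n | X_0 = x), n \<ge> 1.\<close>
fun fpass :: "('s \<Rightarrow> 's pmf) \<Rightarrow> 's \<Rightarrow> nat \<Rightarrow> 's \<Rightarrow> real" where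
  "fpass K y 0 x = 0"
| "fpass K y (Suc 0) x = pmf (K x) y"
| "fpass K y (Suc (Suc n)) x =
     measure_pmf.expectation (K x) (\<lambda>z. if z = y then 0 else fpass K y (Suc n) z)"

text \<open>Positive recurrence: return to y w.p. 1 with finite mean return time.\<close>
definition positive_recurrent :: "('s \<Rightarrow> 's pmf) \<Rightarrow> 's \<Rightarrow> bool" where
  "positive_recurrent K y \<longleftrightarrow>
     summable (\<lambda>n. fpass K y n y) \<and> (\<Sum>n. fpass K y n y) = 1 \<and>
     summable (\<lambda>n. real n * fpass K y n y)"

definition positive_recurrent_class :: "('s \<Rightarrow> 's pmf) \<Rightarrow> 's set \<Rightarrow> bool" where
  "positive_recurrent_class K C \<longleftrightarrow>
     (\<exists>y. C = {z. communicate K y z} \<and> y \<in> C) \<and> (\<forall>z\<in>C. positive_recurrent K z)"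

text \<open>Probability of hitting C within n steps (time 0 included).\<close>
fun reach_within :: "('s \<Rightarrow> 's pmf) \<Rightarrow> 's set \<Rightarrow> nat \<Rightarrow> 's \<Rightarrow> real" where
  "reach_within K C 0 x = (if x \<in> C then 1 else 0)"
| "reach_within K C (Suc n) x =
     (if x \<in> C then 1 else measure_pmf.expectation (K x) (reach_within K C n))"

definition hit_prob :: "('s \<Rightarrow> 's pmf) \<Rightarrow> 's set \<Rightarrow> 's \<Rightarrow> real" where
  "hit_prob K C x = (SUP n. reach_within K C n x)"

text \<open>States are vectors nat^'m (= Z_+^M, M = CARD('m)); P a is the increment
  distribution of action a (homogeneous, independent of the state).\<close>

definition step_pmf :: "('act \<Rightarrow> (int^'m) pmf) \<Rightarrow> 'act \<Rightarrow> nat^'m \<Rightarrow> (nat^'m) pmf" where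
  "step_pmf P a z = map_pmf (\<lambda>d. \<chi> i. nat (int (z$i) + d$i)) (P a)"

definition canon :: "'m \<Rightarrow> int^'m" where
  "canon i = (\<chi> j. if j = i then 1 else 0)"

definition allowed_increments :: "(int^'m) set" where
  "allowed_increments = {canon i | i. True} \<union> {- canon i | i. True}
      \<union> {canon i - canon j | i j. i \<noteq> j}"

definition queueing_network ::
  "(nat^'m \<Rightarrow> 'act set) \<Rightarrow> ('act \<Rightarrow> (int^'m) pmf) \<Rightarrow> bool" where
  "queueing_network Av P \<longleftrightarrow>
     (\<forall>a. \<exists>z. a \<in> Av z) \<and>
     (\<forall>a. set_pmf (P a) \<subseteq> allowed_increments) \<and>
     (\<forall>z a. a \<in> Av z \<longrightarrow> (\<forall>d\<in>set_pmf (P a). \<forall>i. int (z$i) + d$i \<ge> 0))"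

definition drift :: "('act \<Rightarrow> (int^'m) pmf) \<Rightarrow> 'act \<Rightarrow> real^'m" where
  "drift P a = (\<chi> i. measure_pmf.expectation (P a) (\<lambda>d. real_of_int (d$i)))"

definition drift_matrix :: "('act \<Rightarrow> (int^'m) pmf) \<Rightarrow> real^'m^'act" where
  "drift_matrix P = (\<chi> a. drift P a)"

definition policy_kernel ::
  "('act \<Rightarrow> (int^'m) pmf) \<Rightarrow> (nat^'m \<Rightarrow> 'act) \<Rightarrow> nat^'m \<Rightarrow> (nat^'m) pmf" where
  "policy_kernel P pol z = step_pmf P (pol z) z"

definition rvec :: "nat^'m \<Rightarrow> real^'m" where
  "rvec z = (\<chi> i. real (z$i))"

definition stabilizable :: "(nat^'m \<Rightarrow> 'act set) \<Rightarrow> ('act \<Rightarrow> (int^'m) pmf) \<Rightarrow> bool" where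
  "stabilizable Av P \<longleftrightarrow>
     (\<exists>pol. (\<forall>z. pol z \<in> Av z) \<and>
        (\<exists>C. positive_recurrent_class (policy_kernel P pol) C \<and>
             (\<forall>x. hit_prob (policy_kernel P pol) C x = 1)))"

end

theory Submission
  imports Defs
begin

(* Suppose a policy makes the chain positive recurrent at some state y. The function
   M z = \<alpha> \<bullet> (z - y) is a martingale under every action (zero drift) with bounded increments,
   and the non-degeneracy condition makes its one-step variance at y positive. Stopped at the
   return time \<tau> to y, E_y[M(X_(min n \<tau>))\<^sup>2] = E_y[\<Sum>k < min n \<tau>. Var(M(X_(k+1)) | X_k)] is at least
   that variance for every n \<ge> 1. On the other hand M(X_\<tau>) = 0 and E_y \<tau> = \<Sum>k. P_y(\<tau> > k) < \<infinity>,
   which forces E_y[M(X_(min n \<tau>))\<^sup>2] \<rightarrow> 0. All stopped expectations are computed with the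
   taboo operator of the chain killed at y, so no path space is needed. *)

lemma summable_tail_sums:
  fixes f :: "nat \<Rightarrow> real"
  assumes nonneg: "\<And>i. 0 \<le> f i" and summable: "summable f"
    and moment: "summable (\<lambda>i. real i * f i)"
  shows "summable (\<lambda>k. \<Sum>i. f (i + Suc k))"
proof -
  define t where "t k = (\<Sum>i. f (i + Suc k))" for k
  define G where "G N = (\<Sum>i<Suc N. real i * f i)" for N
  have t_Suc: "t k = f (Suc k) + t (Suc k)" for k
    using suminf_minus_initial_segment[OF summable, of "Suc k"]
      suminf_minus_initial_segment[OF summable, of "Suc (Suc k)"]
    by (simp add: t_def)
  have partial: "(\<Sum>k<N. t k) = G N + real N * t N" for N
  proof (induction N)
    case 0 then show ?case by (simp add: G_def)
  next
    case (Suc N) then show ?case using t_Suc[of N] by (simp add: G_def algebra_simps)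
  qed
  have weighted_tail: "real N * t N \<le> (\<Sum>i. real i * f i) - G N" for N
  proof -
    have tail: "summable (\<lambda>i. f (i + Suc N))"
      using summable summable_iff_shift[of f "Suc N"] by blast
    have tail_moment: "summable (\<lambda>i. real (i + Suc N) * f (i + Suc N))"
      using moment summable_iff_shift[of "\<lambda>i. real i * f i" "Suc N"] by blast
    have "real N * t N = (\<Sum>i. real N * f (i + Suc N))"
      unfolding t_def using suminf_mult[OF tail] by simp
    also have "\<dots> \<le> (\<Sum>i. real (i + Suc N) * f (i + Suc N))"
      by (intro suminf_le summable_mult tail tail_moment mult_right_mono nonneg) simp
    also have "\<dots> = (\<Sum>i. real i * f i) - G N"
      unfolding G_def using suminf_minus_initial_segment[OF moment, of "Suc N"] by simp
    finally show ?thesis .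
  qed
  have "(\<Sum>k\<le>n. t k) \<le> (\<Sum>i. real i * f i)" for n
    using partial[of "Suc n"] weighted_tail[of "Suc n"] by (simp add: lessThan_Suc_atMost)
  moreover have "0 \<le> t k" for k
    unfolding t_def using summable summable_iff_shift[of f "Suc k"] by (intro suminf_nonneg nonneg) blast+
  ultimately have "summable t" by (intro bounded_imp_summable)
  then show ?thesis by (simp add: t_def[abs_def])
qed

locale taboo_kernel =
  fixes K :: "'s \<Rightarrow> 's pmf" and y :: 's
  assumes finite_support: "\<And>x. finite (set_pmf (K x))"
begin

lemma expectation_eq_sum:
  "measure_pmf.expectation (K x) f = (\<Sum>z\<in>set_pmf (K x). pmf (K x) z * f z)"
  by (subst integral_measure_pmf_real[OF finite_support]) (auto simp: mult.commute)

lemma sum_pmf_support: "(\<Sum>z\<in>set_pmf (K x). pmf (K x) z) = 1"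
  by (rule sum_pmf_eq_1[OF finite_support]) auto

(* The chain killed on entering y: taboo g x = E_x[g(X_1); X_1 \<noteq> y]. *)
definition taboo :: "('s \<Rightarrow> real) \<Rightarrow> 's \<Rightarrow> real" where
  "taboo g x = measure_pmf.expectation (K x) (\<lambda>z. if z = y then 0 else g z)"

(* survival j x = P_x(X_1, ..., X_j \<noteq> y), i.e. P_x(\<tau> > j) for the return time \<tau> to y. *)
definition survival :: "nat \<Rightarrow> 's \<Rightarrow> real" where
  "survival j = (taboo ^^ j) (\<lambda>_. 1)"

lemma taboo_eq_sum: "taboo g x = (\<Sum>z\<in>set_pmf (K x). pmf (K x) z * (if z = y then 0 else g z))"
  by (simp add: taboo_def expectation_eq_sum)

lemma taboo_add: "taboo (\<lambda>z. g z + h z) x = taboo g x + taboo h x"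
  unfolding taboo_eq_sum sum.distrib[symmetric] by (intro sum.cong) (auto simp: algebra_simps)

lemma taboo_diff: "taboo (\<lambda>z. g z - h z) x = taboo g x - taboo h x"
  unfolding taboo_eq_sum sum_subtractf[symmetric] by (intro sum.cong) (auto simp: algebra_simps)

lemma taboo_cmult: "taboo (\<lambda>z. c * g z) x = c * taboo g x"
  unfolding taboo_eq_sum sum_distrib_left by (intro sum.cong) (auto simp: algebra_simps)

lemma taboo_mono: "(\<And>z. g z \<le> h z) \<Longrightarrow> taboo g x \<le> taboo h x"
  unfolding taboo_eq_sum by (intro sum_mono mult_left_mono) auto

lemma taboo_one_le: "taboo (\<lambda>_. 1) x \<le> 1"
proof -
  have "taboo (\<lambda>_. 1) x \<le> (\<Sum>z\<in>set_pmf (K x). pmf (K x) z)"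
    unfolding taboo_eq_sum by (intro sum_mono) auto
  then show ?thesis by (simp add: sum_pmf_support)
qed

lemma taboo_power_add: "(taboo ^^ n) (\<lambda>z. g z + h z) = (\<lambda>x. (taboo ^^ n) g x + (taboo ^^ n) h x)"
  by (induction n) (auto simp: taboo_add)

lemma taboo_power_cmult: "(taboo ^^ n) (\<lambda>z. c * g z) = (\<lambda>x. c * (taboo ^^ n) g x)"
  by (induction n) (auto simp: taboo_cmult)

lemma taboo_power_zero: "(taboo ^^ n) (\<lambda>_. 0) = (\<lambda>_. 0)"
  using taboo_power_cmult[of n 0 "\<lambda>_. 0"] by simp

lemma taboo_power_sum:
  "(taboo ^^ n) (\<lambda>z. \<Sum>k<(j::nat). g k z) = (\<lambda>x. \<Sum>k<j. (taboo ^^ n) (g k) x)"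
  by (induction j) (simp_all add: taboo_power_zero taboo_power_add)

lemma taboo_power_mono: "(\<And>z. g z \<le> h z) \<Longrightarrow> (taboo ^^ n) g x \<le> (taboo ^^ n) h x"
  by (induction n arbitrary: x) (auto intro: taboo_mono)

lemma taboo_power_nonneg: "(\<And>z. 0 \<le> g z) \<Longrightarrow> 0 \<le> (taboo ^^ n) g x"
  using taboo_power_mono[of "\<lambda>_. 0" g n x] by (simp add: taboo_power_zero)

lemma survival_nonneg: "0 \<le> survival j x"
  unfolding survival_def by (rule taboo_power_nonneg) simp

lemma survival_Suc: "survival (Suc j) = taboo (survival j)"
  by (simp add: survival_def)

lemma taboo_power_survival: "(taboo ^^ n) (survival j) = survival (n + j)"
  by (simp add: survival_def funpow_add)

lemma survival_Suc_le: "survival (Suc j) x \<le> survival j x"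
proof -
  have "survival (Suc j) x = (taboo ^^ j) (taboo (\<lambda>_. 1)) x"
    by (simp only: survival_def funpow_Suc_right comp_apply)
  also have "\<dots> \<le> (taboo ^^ j) (\<lambda>_. 1) x"
    by (intro taboo_power_mono taboo_one_le)
  finally show ?thesis by (simp add: survival_def)
qed

lemma fpass_eq_survival_diff: "fpass K y (Suc j) x = survival j x - survival (Suc j) x"
proof (induction j arbitrary: x)
  case 0
  have "survival 0 x - survival 1 x =
      (\<Sum>z\<in>set_pmf (K x). pmf (K x) z) - (\<Sum>z\<in>set_pmf (K x). pmf (K x) z * (if z = y then 0 else 1))"
    by (simp add: survival_def taboo_eq_sum sum_pmf_support)
  also have "\<dots> = (\<Sum>z\<in>set_pmf (K x). if z = y then pmf (K x) z else 0)"
    unfolding sum_subtractf[symmetric] by (intro sum.cong) auto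
  also have "\<dots> = pmf (K x) y"
    using finite_support[of x] by (simp add: sum.delta set_pmf_iff)
  finally show ?case by simp
next
  case (Suc j)
  have "fpass K y (Suc (Suc j)) x = taboo (fpass K y (Suc j)) x"
    by (simp add: taboo_def)
  also have "fpass K y (Suc j) = (\<lambda>z. survival j z - survival (Suc j) z)"
    using Suc by auto
  finally show ?case by (simp add: taboo_diff survival_Suc)
qed

lemma positive_recurrent_summable_survival:
  assumes "positive_recurrent K y"
  shows "summable (\<lambda>j. survival j y)"
proof -
  define f where "f i = fpass K y i y" for i
  from assms have f: "summable f" "suminf f = 1" "summable (\<lambda>i. real i * f i)"
    unfolding positive_recurrent_def f_def[abs_def] by auto
  have f_nonneg: "0 \<le> f i" for i
    using survival_Suc_le[of "i - 1" y] by (cases i) (auto simp: f_def fpass_eq_survival_diff)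
  have "survival j y = 1 - (\<Sum>i<Suc j. f i)" for j
  proof (induction j)
    case 0 then show ?case by (simp add: survival_def f_def)
  next
    case (Suc j) then show ?case by (simp add: f_def fpass_eq_survival_diff)
  qed
  then have "survival j y = (\<Sum>i. f (i + Suc j))" for j
    using suminf_minus_initial_segment[OF f(1), of "Suc j"] f(2) by simp
  with summable_tail_sums[OF f_nonneg f(1,3)] show ?thesis by simp
qed

end

locale bounded_martingale = taboo_kernel K y for K :: "'s \<Rightarrow> 's pmf" and y +
  fixes M :: "'s \<Rightarrow> real" and B :: real
  assumes martingale: "\<And>x. measure_pmf.expectation (K x) M = M x"
    and zero_at_target: "M y = 0"
    and bounded_increments: "\<And>x z. z \<in> set_pmf (K x) \<Longrightarrow> \<bar>M z - M x\<bar> \<le> B"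
begin

definition step_variance :: "'s \<Rightarrow> real" where
  "step_variance x = measure_pmf.expectation (K x) (\<lambda>z. (M z - M x)\<^sup>2)"

lemma taboo_martingale: "taboo M = M"
proof
  fix x
  have "(\<lambda>z. if z = y then 0 else M z) = M"
    using zero_at_target by auto
  then show "taboo M x = M x"
    unfolding taboo_def by (simp only: martingale)
qed

lemma taboo_power_martingale: "(taboo ^^ n) M = M"
  by (induction n) (simp_all add: taboo_martingale)

lemma taboo_square: "taboo (\<lambda>z. (M z)\<^sup>2) x = (M x)\<^sup>2 + step_variance x"
proof -
  let ?A = "set_pmf (K x)" and ?p = "pmf (K x)"
  have "taboo (\<lambda>z. (M z)\<^sup>2) x = (\<Sum>z\<in>?A. ?p z * (M z)\<^sup>2)"
    unfolding taboo_eq_sum by (intro sum.cong) (auto simp: zero_at_target)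
  moreover have "step_variance x =
      (\<Sum>z\<in>?A. ?p z * (M z)\<^sup>2) - 2 * M x * (\<Sum>z\<in>?A. ?p z * M z) + (M x)\<^sup>2 * (\<Sum>z\<in>?A. ?p z)"
    unfolding step_variance_def expectation_eq_sum sum_distrib_left sum_subtractf[symmetric]
      sum.distrib[symmetric]
    by (intro sum.cong) (auto simp: power2_diff algebra_simps)
  ultimately show ?thesis
    using martingale[of x] by (simp add: expectation_eq_sum sum_pmf_support power2_eq_square)
qed

lemma taboo_power_square:
  "(taboo ^^ n) (\<lambda>z. (M z)\<^sup>2) = (\<lambda>x. (M x)\<^sup>2 + (\<Sum>k<n. (taboo ^^ k) step_variance x))"
proof (induction n)
  case 0 then show ?case by simp
next
  case (Suc n)
  have "(taboo ^^ Suc n) (\<lambda>z. (M z)\<^sup>2) = (taboo ^^ n) (taboo (\<lambda>z. (M z)\<^sup>2))"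
    by (simp only: funpow_Suc_right comp_apply)
  also have "taboo (\<lambda>z. (M z)\<^sup>2) = (\<lambda>x. (M x)\<^sup>2 + step_variance x)"
    using taboo_square by auto
  finally show ?case using Suc by (simp add: taboo_power_add add.assoc)
qed

lemma step_variance_nonneg: "0 \<le> step_variance x"
  unfolding step_variance_def by simp

lemma step_variance_le: "step_variance x \<le> B\<^sup>2"
proof -
  have "step_variance x \<le> (\<Sum>z\<in>set_pmf (K x). pmf (K x) z * B\<^sup>2)"
    unfolding step_variance_def expectation_eq_sum
  proof (intro sum_mono mult_left_mono)
    fix z assume "z \<in> set_pmf (K x)"
    then show "(M z - M x)\<^sup>2 \<le> B\<^sup>2"
      using bounded_increments abs_le_square_iff by fastforce
  qed simp
  then show ?thesis by (simp add: sum_distrib_right[symmetric] sum_pmf_support)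
qed

lemma taboo_power_step_variance_le: "(taboo ^^ k) step_variance x \<le> B\<^sup>2 * survival k x"
proof -
  have "(taboo ^^ k) step_variance x \<le> (taboo ^^ k) (\<lambda>_. B\<^sup>2 * 1) x"
    by (intro taboo_power_mono) (simp add: step_variance_le)
  then show ?thesis by (simp only: taboo_power_cmult survival_def)
qed

(* Expand 0 \<le> (taboo ^^ j) (\<lambda>z. (M z - M x)\<^sup>2) x; the martingale terms cancel. *)
lemma square_mul_hit_le: "(M x)\<^sup>2 * (1 - survival j x) \<le> B\<^sup>2 * (\<Sum>k<j. survival k x)"
proof -
  define c where "c = M x"
  have "(\<lambda>z. (M z - c)\<^sup>2) = (\<lambda>z. ((M z)\<^sup>2 + (-2 * c) * M z) + c\<^sup>2 * 1)"
    by (auto simp: power2_diff algebra_simps)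
  then have "(taboo ^^ j) (\<lambda>z. (M z - c)\<^sup>2) x =
      (taboo ^^ j) (\<lambda>z. (M z)\<^sup>2) x + (-2 * c) * (taboo ^^ j) M x + c\<^sup>2 * survival j x"
    by (simp only: taboo_power_add taboo_power_cmult survival_def)
  also have "\<dots> = (\<Sum>k<j. (taboo ^^ k) step_variance x) - (M x)\<^sup>2 * (1 - survival j x)"
    unfolding taboo_power_square taboo_power_martingale c_def by (simp add: power2_eq_square algebra_simps)
  finally have "(M x)\<^sup>2 * (1 - survival j x) \<le> (\<Sum>k<j. (taboo ^^ k) step_variance x)"
    using taboo_power_nonneg[of "\<lambda>z. (M z - c)\<^sup>2" j x] by simp
  also have "\<dots> \<le> (\<Sum>k<j. B\<^sup>2 * survival k x)"
    by (intro sum_mono taboo_power_step_variance_le)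
  finally show ?thesis by (simp add: sum_distrib_left)
qed

lemma taboo_power_local_mono:
  assumes "\<And>w. \<bar>M w - M x\<bar> \<le> real n * B \<Longrightarrow> g w \<le> h w"
  shows "(taboo ^^ n) g x \<le> (taboo ^^ n) h x"
  using assms
proof (induction n arbitrary: x)
  case 0 then show ?case by simp
next
  case (Suc n x)
  have "(taboo ^^ n) g z \<le> (taboo ^^ n) h z" if z: "z \<in> set_pmf (K x)" for z
  proof (rule Suc.IH)
    fix w assume "\<bar>M w - M z\<bar> \<le> real n * B"
    with bounded_increments[OF z] have "\<bar>M w - M x\<bar> \<le> real (Suc n) * B"
      by (simp add: algebra_simps)
    then show "g w \<le> h w" by (rule Suc.prems)
  qed
  then have "taboo ((taboo ^^ n) g) x \<le> taboo ((taboo ^^ n) h) x"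
    unfolding taboo_eq_sum by (intro sum_mono) (auto intro: mult_left_mono)
  then show ?case by simp
qed

(* (taboo ^^ n) (\<lambda>z. (M z)\<^sup>2) y = E_y[M(X_n)\<^sup>2; \<tau> > n] is split according to whether the chain
   returns to y by time n + j: on the event \<tau> > n + j we have \<bar>M(X_n)\<bar> \<le> n B, and on the
   complement square_mul_hit_le applies at X_n. *)
lemma step_variance_le_survival:
  assumes "1 \<le> n"
  shows "step_variance y \<le>
    (real n * B)\<^sup>2 * survival (j + n) y + B\<^sup>2 * (\<Sum>k<j. survival (k + n) y)"
proof -
  have "step_variance y = (taboo ^^ 0) step_variance y"
    by simp
  also have "\<dots> \<le> (\<Sum>k<n. (taboo ^^ k) step_variance y)"
    using assms by (intro member_le_sum) (auto intro: taboo_power_nonneg step_variance_nonneg)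
  also have "\<dots> = (taboo ^^ n) (\<lambda>z. (M z)\<^sup>2) y"
    by (simp add: taboo_power_square zero_at_target)
  also have "(\<lambda>z. (M z)\<^sup>2) = (\<lambda>z. (M z)\<^sup>2 * survival j z + (M z)\<^sup>2 * (1 - survival j z))"
    by (auto simp: algebra_simps)
  also have "(taboo ^^ n) \<dots> y =
      (taboo ^^ n) (\<lambda>z. (M z)\<^sup>2 * survival j z) y + (taboo ^^ n) (\<lambda>z. (M z)\<^sup>2 * (1 - survival j z)) y"
    by (simp only: taboo_power_add)
  also have "(taboo ^^ n) (\<lambda>z. (M z)\<^sup>2 * survival j z) y \<le>
      (taboo ^^ n) (\<lambda>z. (real n * B)\<^sup>2 * survival j z) y"
  proof (rule taboo_power_local_mono)
    fix w assume "\<bar>M w - M y\<bar> \<le> real n * B"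
    then have "(M w)\<^sup>2 \<le> (real n * B)\<^sup>2"
      using zero_at_target abs_le_square_iff by fastforce
    then show "(M w)\<^sup>2 * survival j w \<le> (real n * B)\<^sup>2 * survival j w"
      by (intro mult_right_mono survival_nonneg)
  qed
  also have "(taboo ^^ n) (\<lambda>z. (M z)\<^sup>2 * (1 - survival j z)) y \<le>
      (taboo ^^ n) (\<lambda>z. B\<^sup>2 * (\<Sum>k<j. survival k z)) y"
    by (intro taboo_power_mono square_mul_hit_le)
  finally show ?thesis
    by (simp add: taboo_power_cmult taboo_power_sum taboo_power_survival add.commute)
qed

lemma positive_recurrent_step_variance_zero:
  assumes "positive_recurrent K y"
  shows "step_variance y = 0"
proof -
  define s where "s j = survival j y" for j
  have summable: "summable s"
    unfolding s_def[abs_def] using assms by (rule positive_recurrent_summable_survival)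
  have "step_variance y \<le> B\<^sup>2 * (suminf s - (\<Sum>i<n. s i))" if "1 \<le> n" for n
  proof (rule LIMSEQ_le_const)
    have "summable (\<lambda>k. s (k + n))"
      using summable summable_iff_shift[of s n] by blast
    then have "(\<lambda>j. (real n * B)\<^sup>2 * s (j + n) + B\<^sup>2 * (\<Sum>k<j. s (k + n)))
        \<longlonglongrightarrow> (real n * B)\<^sup>2 * 0 + B\<^sup>2 * (\<Sum>k. s (k + n))"
      by (intro tendsto_intros summable_LIMSEQ LIMSEQ_ignore_initial_segment
          summable_LIMSEQ_zero[OF summable])
    then show "(\<lambda>j. (real n * B)\<^sup>2 * s (j + n) + B\<^sup>2 * (\<Sum>k<j. s (k + n)))
        \<longlonglongrightarrow> B\<^sup>2 * (suminf s - (\<Sum>i<n. s i))"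
      using suminf_minus_initial_segment[OF summable, of n] by simp
    show "\<exists>N. \<forall>j\<ge>N. step_variance y \<le> (real n * B)\<^sup>2 * s (j + n) + B\<^sup>2 * (\<Sum>k<j. s (k + n))"
      unfolding s_def using step_variance_le_survival[OF that] by blast
  qed
  moreover have "(\<lambda>n. B\<^sup>2 * (suminf s - (\<Sum>i<n. s i))) \<longlonglongrightarrow> B\<^sup>2 * (suminf s - suminf s)"
    by (intro tendsto_intros summable_LIMSEQ summable)
  ultimately have "step_variance y \<le> B\<^sup>2 * (suminf s - suminf s)"
    by (intro LIMSEQ_le_const) auto
  then show ?thesis
    using step_variance_nonneg[of y] by simp
qed

lemma positive_recurrent_imp_constant_step:
  assumes "positive_recurrent K y" and "z \<in> set_pmf (K y)"
  shows "M z = M y"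
proof -
  have "(\<Sum>w\<in>set_pmf (K y). pmf (K y) w * (M w - M y)\<^sup>2) = 0"
    using positive_recurrent_step_variance_zero[OF assms(1)]
    by (simp add: step_variance_def expectation_eq_sum)
  then have "pmf (K y) z * (M z - M y)\<^sup>2 = 0"
    using assms(2) finite_support by (subst (asm) sum_nonneg_eq_0_iff) auto
  then show ?thesis
    using assms(2) by (simp add: set_pmf_iff)
qed

end

lemma finite_allowed_increments: "finite (allowed_increments :: (int^'m) set)"
proof (rule finite_subset)
  show "allowed_increments \<subseteq>
      range canon \<union> range (\<lambda>i. - canon i) \<union> (\<lambda>(i, j). canon i - canon j) ` UNIV"
    by (auto simp: allowed_increments_def)
qed auto

definition rvec_int :: "int^'m \<Rightarrow> real^'m" where
  "rvec_int d = (\<chi> i. real_of_int (d$i))"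

lemma rvec_step:
  assumes "\<And>i. 0 \<le> int (z$i) + d$i"
  shows "rvec (\<chi> i. nat (int (z$i) + d$i)) = rvec z + rvec_int d"
  using assms by (auto simp: vec_eq_iff rvec_def rvec_int_def)

lemma drift_matrix_mult_nth:
  assumes "finite (set_pmf (P a))"
  shows "(drift_matrix P *v \<alpha>) $ a = measure_pmf.expectation (P a) (\<lambda>d. \<alpha> \<bullet> rvec_int d)"
proof -
  have "(drift_matrix P *v \<alpha>) $ a =
      (\<Sum>i\<in>UNIV. measure_pmf.expectation (P a) (\<lambda>d. \<alpha>$i * real_of_int (d$i)))"
    by (simp add: matrix_vector_mult_def drift_matrix_def drift_def mult.commute)
  also have "\<dots> = measure_pmf.expectation (P a) (\<lambda>d. \<Sum>i\<in>UNIV. \<alpha>$i * real_of_int (d$i))"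
    by (rule Bochner_Integration.integral_sum[symmetric])
      (rule integrable_measure_pmf_finite[OF assms])
  finally show ?thesis
    by (simp add: inner_vec_def rvec_int_def)
qed

lemma policy_kernel_bounded_martingale:
  fixes Av :: "nat^'m \<Rightarrow> 'act::finite set" and P :: "'act \<Rightarrow> (int^'m) pmf"
  assumes network: "queueing_network Av P" and policy: "\<And>z. pol z \<in> Av z"
    and drift_zero: "drift_matrix P *v \<alpha> = 0"
  shows "bounded_martingale (policy_kernel P pol) y (\<lambda>z. \<alpha> \<bullet> rvec z - \<alpha> \<bullet> rvec y)
      (Max ((\<lambda>d. \<bar>\<alpha> \<bullet> rvec_int d\<bar>) ` allowed_increments))"
proof -
  define M where "M z = \<alpha> \<bullet> rvec z - \<alpha> \<bullet> rvec y" for z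
  define step where "step z d = (\<chi> i. nat (int (z$i) + d$i))" for z :: "nat^'m" and d :: "int^'m"
  have increments: "set_pmf (P a) \<subseteq> allowed_increments" for a
    using network by (auto simp: queueing_network_def)
  have finite_P: "finite (set_pmf (P a))" for a
    using finite_subset[OF increments finite_allowed_increments] .
  have kernel: "policy_kernel P pol z = map_pmf (step z) (P (pol z))" for z
    by (simp add: policy_kernel_def step_pmf_def step_def[abs_def])
  have M_step: "M (step z d) = M z + \<alpha> \<bullet> rvec_int d" if "d \<in> set_pmf (P (pol z))" for z d
  proof -
    have "rvec (step z d) = rvec z + rvec_int d"
      unfolding step_def using network policy[of z] that
      by (intro rvec_step) (auto simp: queueing_network_def)
    then show ?thesis by (simp add: M_def inner_add_right)
  qed
  show ?thesis
    unfolding M_def[symmetric]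
  proof unfold_locales
    show "finite (set_pmf (policy_kernel P pol z))" for z
      by (simp add: kernel finite_P)
    show "measure_pmf.expectation (policy_kernel P pol z) M = M z" for z
    proof -
      have "measure_pmf.expectation (policy_kernel P pol z) M =
          measure_pmf.expectation (P (pol z)) (\<lambda>d. M z + \<alpha> \<bullet> rvec_int d)"
        unfolding kernel integral_map_pmf by (intro integral_cong_AE AE_pmfI) (auto simp: M_step)
      also have "\<dots> = M z + (drift_matrix P *v \<alpha>) $ pol z"
        by (simp add: drift_matrix_mult_nth[OF finite_P] integrable_measure_pmf_finite[OF finite_P])
      finally show ?thesis by (simp add: drift_zero)
    qed
    show "M y = 0"
      by (simp add: M_def)
    show "\<bar>M w - M z\<bar> \<le> Max ((\<lambda>d. \<bar>\<alpha> \<bullet> rvec_int d\<bar>) ` allowed_increments)"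
      if "w \<in> set_pmf (policy_kernel P pol z)" for z w
    proof -
      from that obtain d where d: "d \<in> set_pmf (P (pol z))" and w: "w = step z d"
        by (auto simp: kernel)
      have "\<bar>M w - M z\<bar> = \<bar>\<alpha> \<bullet> rvec_int d\<bar>"
        using M_step[OF d] w by simp
      also have "\<dots> \<le> Max ((\<lambda>d. \<bar>\<alpha> \<bullet> rvec_int d\<bar>) ` allowed_increments)"
        using d increments finite_allowed_increments by (intro Max_ge) auto
      finally show ?thesis .
    qed
  qed
qed

theorem theorem2:
  fixes Av :: "nat^'m \<Rightarrow> 'act::finite set"
    and P :: "'act \<Rightarrow> (int^'m) pmf"
  assumes "queueing_network Av P"
    and "rank (drift_matrix P) < CARD('m)"
    and "\<exists>\<alpha>::real^'m. drift_matrix P *v \<alpha> = 0 \<and>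
           (\<forall>x. \<forall>a\<in>Av x.
              measure_pmf.prob (step_pmf P a x) {y. \<alpha> \<bullet> rvec y \<noteq> \<alpha> \<bullet> rvec x} > 0)"
  shows "\<not> stabilizable Av P"
(* The rank hypothesis is implied by the last one, whose \<alpha> is necessarily nonzero. *)
proof
  assume "stabilizable Av P"
  then obtain pol C where policy: "\<And>z. pol z \<in> Av z"
    and "positive_recurrent_class (policy_kernel P pol) C"
    by (auto simp: stabilizable_def)
  then obtain y where recurrent: "positive_recurrent (policy_kernel P pol) y"
    by (auto simp: positive_recurrent_class_def)
  from assms(3) obtain \<alpha> :: "real^'m" where drift_zero: "drift_matrix P *v \<alpha> = 0"
    and moves: "measure_pmf.prob (policy_kernel P pol y) {z. \<alpha> \<bullet> rvec z \<noteq> \<alpha> \<bullet> rvec y} > 0"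
    using policy by (fastforce simp: policy_kernel_def)
  interpret bounded_martingale "policy_kernel P pol" y "\<lambda>z. \<alpha> \<bullet> rvec z - \<alpha> \<bullet> rvec y"
    "Max ((\<lambda>d. \<bar>\<alpha> \<bullet> rvec_int d\<bar>) ` allowed_increments)"
    using assms(1) policy drift_zero by (rule policy_kernel_bounded_martingale)
  have "set_pmf (policy_kernel P pol y) \<inter> {z. \<alpha> \<bullet> rvec z \<noteq> \<alpha> \<bullet> rvec y} = {}"
    using positive_recurrent_imp_constant_step[OF recurrent] by auto
  with moves show False
    by (simp add: measure_pmf_zero_iff[symmetric])
qed

end
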